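(* Let $\Sigma$ be a germ at $0$ of a closed subset of $\mathbb{R}^n$ with $0\in\Sigma$, let $r\ge1$ and $n\ge p$, and let $f=(f_1,\dots,f_p)\in\mathcal{E}_{[r]}(n,p)$. The following are equivalent: (1) $f$ satisfies the relative Kuo condition $(K_\Sigma)$: there are $C,\alpha,\bar w>0$ such that $\kappa(df(x))\ge C\,d(x,\Sigma)^{r-1}$ for all $x\in\mathcal{H}^\Sigma_r(f;\bar w)\cap\{\|x\|<\alpha\}$; (2) $f$ satisfies condition $(\widetilde K_\Sigma)$: $d(x,\Sigma)\kappa(df(x))+\|f(x)\|\succsim d(x,\Sigma)^r$ in some neighbourhood of $0$; (3) $d(x,\Sigma)\left(\dfrac{\Gamma(\operatorname{grad}f_1(x),\dots,\operatorname{grad}f_p(x))}{\sum_{j=1}^p\Gamma((\operatorname{grad}f_i(x))_{i\neq j})}\right)^{1/2}+\|f(x)\|\succsim d(x,\Sigma)^r$ in some neighbourhood of $0$; (4) $d(x,\Sigma)\|df^*(x)y\|+\|f(x)\|\succsim d(x,\Sigma)^r$ for $x$ in some neighbourhood of $0$, uniformly in $y\in\mathbb{S}^{p-1}$.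
   Context: $\mathcal{E}_{[s]}(n,p)$ is the set of germs at $0$ of $C^s$ maps $(\mathbb{R}^n,0)\to(\mathbb{R}^p,0)$. $d(x,\Sigma)$ is the distance from $x$ to $\Sigma$. For non-negative functions $\phi,\psi$ near $0$, $\phi\precsim\psi$ (or $\psi\succsim\phi$) means there are $K,\delta>0$ with $\phi\le K\psi$ on the closed ball of radius $\delta$ about $0$. The Kuo distance of vectors $v_1,\dots,v_p\in\mathbb{R}^n$ is $\kappa(v_1,\dots,v_p)=\min_i \operatorname{dist}(v_i,V_i)$, where $V_i$ is the span of the $v_j$, $j\neq i$ (so $\kappa(v)=\|v\|$ when $p=1$); $\kappa(df(x)):=\kappa(\operatorname{grad}f_1(x),\dots,\operatorname{grad}f_p(x))$. The relative horn-neighbourhood is $\mathcal{H}^\Sigma_r(f;\bar w)=\{x:\|f(x)\|\le\bar w\,d(x,\Sigma)^r\}$. $\Gamma(v_1,\dots,v_k)=\det(\langle v_i,v_j\rangle)_{i,j}$ is the Gram determinant (with the Gram determinant of the empty family equal to $1$). $df^*(x):\mathbb{R}^p\to\mathbb{R}^n$ is the adjoint of $df(x)$, i.e. $df^*(x)y=\sum_i y_i\operatorname{grad}f_i(x)$, and $\mathbb{S}^{p-1}$ is the unit sphere of $\mathbb{R}^p$. *)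

theory Defs
  imports "HOL-Analysis.Analysis"
begin

fun Ck_on :: "nat \<Rightarrow> (real^'n) set \<Rightarrow> (real^'n \<Rightarrow> real^'p) \<Rightarrow> bool" where
  "Ck_on 0 U f = continuous_on U f"
| "Ck_on (Suc k) U f =
     (f differentiable_on U \<and>
      (\<forall>j. Ck_on k U (\<lambda>x. frechet_derivative f (at x) (axis j 1))))"

text \<open>Germs at 0 of C^k maps (R^n,0) \<rightarrow> (R^p,0): represented by a map which is C^k on some
  open neighbourhood of 0 and vanishes at 0.\<close>
definition Ck_germ0 :: "nat \<Rightarrow> (real^'n \<Rightarrow> real^'p) \<Rightarrow> bool" where
  "Ck_germ0 k f \<longleftrightarrow> f 0 = 0 \<and> (\<exists>U. open U \<and> 0 \<in> U \<and> Ck_on k U f)"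

definition df :: "(real^'n \<Rightarrow> real^'p) \<Rightarrow> real^'n \<Rightarrow> real^'n \<Rightarrow> real^'p" where
  "df f x = frechet_derivative f (at x)"

definition grad_comp :: "(real^'n \<Rightarrow> real^'p) \<Rightarrow> 'p \<Rightarrow> real^'n \<Rightarrow> real^'n" where
  "grad_comp f i x = (\<chi> j. df f x (axis j 1) $ i)"

definition kuo :: "('p::finite \<Rightarrow> real^'n) \<Rightarrow> real" where
  "kuo v = Min (range (\<lambda>i. infdist (v i) (span (v ` (UNIV - {i})))))"

definition kappa_df :: "(real^'n \<Rightarrow> real^'p) \<Rightarrow> real^'n \<Rightarrow> real" where
  "kappa_df f x = kuo (\<lambda>i. grad_comp f i x)"

text \<open>Gram determinant of the subfamily (v i)_{i \<in> I} (Leibniz formula); empty family gives 1.\<close>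
definition gram :: "('p \<Rightarrow> real^'n) \<Rightarrow> 'p set \<Rightarrow> real" where
  "gram v I = (\<Sum>\<pi> \<in> {\<pi>. \<pi> permutes I}. of_int (sign \<pi>) * (\<Prod>i\<in>I. inner (v i) (v (\<pi> i))))"

definition precsim :: "(real^'n \<Rightarrow> real) \<Rightarrow> (real^'n \<Rightarrow> real) \<Rightarrow> bool" where
  "precsim \<phi> \<psi> \<longleftrightarrow> (\<exists>K \<delta>. K > 0 \<and> \<delta> > 0 \<and> (\<forall>x\<in>cball 0 \<delta>. \<phi> x \<le> K * \<psi> x))"

definition horn :: "(real^'n) set \<Rightarrow> real \<Rightarrow> (real^'n \<Rightarrow> real^'p) \<Rightarrow> real \<Rightarrow> (real^'n) set" where
  "horn \<Sigma> r f w = {x. norm (f x) \<le> w * infdist x \<Sigma> powr r}"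

end

theory Submission
  imports Defs
begin

text \<open>Condition (1) is equivalent to (2) for elementary reasons: inside the horn the term
  \<open>\<parallel>f x\<parallel>\<close> is dominated by \<open>d(x,\<Sigma>)\<^sup>r\<close>, outside it \<open>\<parallel>f x\<parallel>\<close> alone dominates \<open>d(x,\<Sigma>)\<^sup>r\<close>.
  Conditions (2), (3) and (4) are equivalent because the Kuo distance \<open>\<kappa>\<close> of a family \<open>v\<close>, the
  Gram quotient in (3) and \<open>\<parallel>\<Sum>\<^sub>i y\<^sub>i v\<^sub>i\<parallel>\<close> for unit vectors \<open>y\<close> are comparable up to constants
  depending only on \<open>p\<close>. For the Gram quotient this comes from the factorisation
  \<open>\<Gamma>(v) = \<Gamma>((v\<^sub>i)\<^sub>i\<^sub>\<noteq>\<^sub>j) \<cdot> dist(v\<^sub>j, V\<^sub>j)\<^sup>2\<close> (Gram--Schmidt); for the adjoint, from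
  \<open>\<parallel>\<Sum>\<^sub>k y\<^sub>k v\<^sub>k\<parallel> \<ge> \<bar>y\<^sub>i\<bar> dist(v\<^sub>i, V\<^sub>i)\<close>, which is an equality for a suitable \<open>y\<close>.\<close>

definition leibniz_det :: "('p \<Rightarrow> 'p \<Rightarrow> real) \<Rightarrow> 'p set \<Rightarrow> real" where
  "leibniz_det A I = (\<Sum>\<pi> \<in> {\<pi>. \<pi> permutes I}. of_int (sign \<pi>) * (\<Prod>i\<in>I. A i (\<pi> i)))"

lemma gram_eq_leibniz_det: "gram v I = leibniz_det (\<lambda>i k. v i \<bullet> v k) I"
  unfolding gram_def leibniz_det_def ..

lemma det_eq_leibniz_det: "det (M::real^'p^'p) = leibniz_det (\<lambda>i k. M$i$k) UNIV"
  unfolding det_def leibniz_det_def by simp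

lemma leibniz_det_cong:
  assumes "\<And>i k. i \<in> I \<Longrightarrow> k \<in> I \<Longrightarrow> A i k = B i k"
  shows "leibniz_det A I = leibniz_det B I"
  unfolding leibniz_det_def
proof (rule sum.cong[OF refl])
  fix \<pi> assume "\<pi> \<in> {\<pi>. \<pi> permutes I}"
  hence "(\<Prod>i\<in>I. A i (\<pi> i)) = (\<Prod>i\<in>I. B i (\<pi> i))"
    using assms by (intro prod.cong) (auto simp: permutes_in_image)
  thus "of_int (sign \<pi>) * (\<Prod>i\<in>I. A i (\<pi> i)) = of_int (sign \<pi>) * (\<Prod>i\<in>I. B i (\<pi> i))"
    by simp
qed

lemma leibniz_det_identity_rows:
  fixes A :: "'p::finite \<Rightarrow> 'p \<Rightarrow> real"
  assumes "S \<subseteq> T" and "\<And>i k. i \<in> T - S \<Longrightarrow> k \<in> T \<Longrightarrow> A i k = (if i = k then 1 else 0)"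
  shows "leibniz_det A T = leibniz_det A S"
proof -
  have sub: "{\<pi>. \<pi> permutes S} \<subseteq> {\<pi>. \<pi> permutes T}"
    using assms(1) permutes_subset by blast
  have vanish: "\<forall>\<pi>\<in>{\<pi>. \<pi> permutes T} - {\<pi>. \<pi> permutes S}.
      of_int (sign \<pi>) * (\<Prod>i\<in>T. A i (\<pi> i)) = 0"
  proof
    fix \<pi> assume "\<pi> \<in> {\<pi>. \<pi> permutes T} - {\<pi>. \<pi> permutes S}"
    hence T: "\<pi> permutes T" and "\<not> \<pi> permutes S" by auto
    then obtain i where i: "i \<in> T - S" "\<pi> i \<noteq> i" using permutes_superset by blast
    hence "A i (\<pi> i) = 0" using assms(2) T by (auto simp: permutes_in_image)
    thus "of_int (sign \<pi>) * (\<Prod>i\<in>T. A i (\<pi> i)) = 0" using i(1) by (simp; blast)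
  qed
  have restrict: "(\<Prod>i\<in>T. A i (\<pi> i)) = (\<Prod>i\<in>S. A i (\<pi> i))" if "\<pi> permutes S" for \<pi>
  proof -
    have "(\<Prod>i\<in>T-S. A i (\<pi> i)) = 1"
      using assms(2) permutes_not_in[OF that] by (intro prod.neutral) auto
    with prod.subset_diff[OF assms(1) finite, of "\<lambda>i. A i (\<pi> i)"] show ?thesis by simp
  qed
  show ?thesis unfolding leibniz_det_def
    by (subst sum.mono_neutral_right[OF _ sub vanish])
      (auto intro!: sum.cong simp: restrict finite_permutations)
qed

lemma leibniz_det_unit_row:
  fixes A :: "'p::finite \<Rightarrow> 'p \<Rightarrow> real"
  assumes j: "j \<in> I" and row: "\<And>k. k \<in> I \<Longrightarrow> A j k = (if k = j then c else 0)"
  shows "leibniz_det A I = c * leibniz_det A (I - {j})"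
proof -
  define B where "B = (\<lambda>i k. if i = j then (if k = j then 1 else 0) else A i k)"
  have "leibniz_det B I = leibniz_det B (I - {j})"
    by (rule leibniz_det_identity_rows) (auto simp: B_def)
  also have "\<dots> = leibniz_det A (I - {j})"
    by (rule leibniz_det_cong) (auto simp: B_def)
  finally have B: "leibniz_det B I = leibniz_det A (I - {j})" .
  have "leibniz_det A I = c * leibniz_det B I"
    unfolding leibniz_det_def sum_distrib_left
  proof (rule sum.cong[OF refl])
    fix \<pi> assume "\<pi> \<in> {\<pi>. \<pi> permutes I}"
    hence "A j (\<pi> j) = c * B j (\<pi> j)" using j row by (simp add: B_def permutes_in_image)
    moreover have "(\<Prod>i\<in>I-{j}. B i (\<pi> i)) = (\<Prod>i\<in>I-{j}. A i (\<pi> i))"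
      by (rule prod.cong) (auto simp: B_def)
    ultimately show "of_int (sign \<pi>) * (\<Prod>i\<in>I. A i (\<pi> i))
        = c * (of_int (sign \<pi>) * (\<Prod>i\<in>I. B i (\<pi> i)))"
      by (simp add: prod.remove[OF finite j])
  qed
  with B show ?thesis by simp
qed

definition gram_matrix :: "('p \<Rightarrow> real^'n) \<Rightarrow> ('p \<Rightarrow> real^'n) \<Rightarrow> 'p set \<Rightarrow> real^'p^'p" where
  "gram_matrix a b I = (\<chi> i k. if i \<in> I \<and> k \<in> I then a i \<bullet> b k else (if i = k then 1 else 0))"

lemma gram_eq_det_gram_matrix: "gram (v::'p::finite \<Rightarrow> real^'n) I = det (gram_matrix v v I)"
proof -
  have "det (gram_matrix v v I) = leibniz_det (\<lambda>i k. gram_matrix v v I $i$k) I"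
    unfolding det_eq_leibniz_det by (rule leibniz_det_identity_rows) (auto simp: gram_matrix_def)
  also have "\<dots> = gram v I"
    unfolding gram_eq_leibniz_det by (rule leibniz_det_cong) (auto simp: gram_matrix_def)
  finally show ?thesis ..
qed

lemma transpose_gram_matrix: "transpose (gram_matrix a b I) = gram_matrix b a I"
  unfolding gram_matrix_def transpose_def by (auto simp: vec_eq_iff inner_commute)

lemma det_gram_matrix_add_span:
  fixes a b :: "'p::finite \<Rightarrow> real^'n"
  assumes j: "j \<in> I" and t: "t \<in> span (a ` (I - {j}))"
  shows "det (gram_matrix (a(j := a j + t)) b I) = det (gram_matrix a b I)"
proof -
  let ?A = "gram_matrix a b I"
  define row_of :: "real^'n \<Rightarrow> real^'p" where "row_of w = (\<chi> k. if k \<in> I then w \<bullet> b k else 0)" for w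
  have eq: "gram_matrix (a(j := a j + t)) b I
      = (\<chi> k. if k = j then row j ?A + row_of t else row k ?A)"
    unfolding gram_matrix_def row_of_def row_def using j by (auto simp: vec_eq_iff inner_add_left)
  obtain u where t_sum: "t = (\<Sum>w\<in>a ` (I - {j}). u w *\<^sub>R w)"
    using t unfolding span_finite[OF finite_imageI[OF finite]] by auto
  have "row_of t = (\<Sum>w\<in>a ` (I - {j}). u w *s row_of w)"
    unfolding row_of_def t_sum by (auto simp: vec_eq_iff inner_sum_left sum_component)
  also have "\<dots> \<in> vec.span {row i ?A |i. i \<noteq> j}"
  proof (intro vec.span_sum vec.span_scale vec.span_base)
    fix w assume "w \<in> a ` (I - {j})"
    then obtain i where i: "i \<in> I" "i \<noteq> j" "w = a i" by auto
    have "row_of (a i) = row i ?A"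
      using i(1,2) by (auto simp: vec_eq_iff row_of_def row_def gram_matrix_def)
    thus "row_of w \<in> {row i ?A |i. i \<noteq> j}" using i by blast
  qed
  finally have "row_of t \<in> vec.span {row i ?A |i. i \<noteq> j}" .
  from det_row_span[OF this] eq show ?thesis by simp
qed

lemma span_orthogonal_decomp_infdist:
  fixes x :: "'a::euclidean_space"
  obtains y z where "y \<in> span S" and "\<And>w. w \<in> span S \<Longrightarrow> orthogonal z w" and "x = y + z"
    and "infdist x (span S) = norm z"
proof -
  obtain y z where y: "y \<in> span S" and orth: "\<And>w. w \<in> span S \<Longrightarrow> orthogonal z w"
    and x: "x = y + z"
    using orthogonal_subspace_decomp_exists[of S x] by blast
  have "infdist x (span S) = norm z"
  proof (rule antisym)
    show "infdist x (span S) \<le> norm z" using infdist_le[OF y, of x] x by (simp add: dist_norm)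
  next
    have ne: "span S \<noteq> {}" using span_zero by blast
    show "norm z \<le> infdist x (span S)"
      unfolding infdist_notempty[OF ne]
    proof (rule cINF_greatest[OF ne])
      fix w assume "w \<in> span S"
      hence "y - w \<in> span S" using y by (simp add: span_diff)
      hence "(norm (z + (y - w)))\<^sup>2 = (norm z)\<^sup>2 + (norm (y - w))\<^sup>2"
        using orth norm_add_Pythagorean by blast
      hence "(norm z)\<^sup>2 \<le> (norm (z + (y - w)))\<^sup>2" by simp
      hence "norm z \<le> norm (z + (y - w))" by (simp add: power_mono_iff)
      thus "norm z \<le> dist x w" using x by (simp add: dist_norm algebra_simps)
    qed
  qed
  with y orth x that show ?thesis by blast
qed

lemma gram_eq_mult_infdist:
  fixes v :: "'p::finite \<Rightarrow> real^'n"
  assumes j: "j \<in> I"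
  shows "gram v I = gram v (I - {j}) * (infdist (v j) (span (v ` (I - {j}))))\<^sup>2"
proof -
  let ?S = "span (v ` (I - {j}))"
  obtain y z where y: "y \<in> ?S" and orth: "\<And>w. w \<in> ?S \<Longrightarrow> orthogonal z w"
    and vj: "v j = y + z" and dist: "infdist (v j) ?S = norm z"
    using span_orthogonal_decomp_infdist[where x="v j" and S="v ` (I - {j})"] by blast
  \<comment> \<open>Replacing \<open>v j\<close> by its component \<open>z\<close> orthogonal to the other vectors is one row and
    one column operation on the Gram matrix, after which row \<open>j\<close> is \<open>(z \<bullet> z) e\<^sub>j\<close>.\<close>
  define v' where "v' = v(j := z)"
  have v': "v' = v(j := v j + - y)" using vj by (simp add: v'_def)
  have my: "- y \<in> ?S" using y by (rule span_neg)
  have "gram v I = det (gram_matrix v v I)" by (rule gram_eq_det_gram_matrix)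
  also have "\<dots> = det (gram_matrix v' v I)"
    unfolding v' by (rule det_gram_matrix_add_span[OF j my, symmetric])
  also have "\<dots> = det (gram_matrix v v' I)"
    by (metis det_transpose transpose_gram_matrix)
  also have "\<dots> = det (gram_matrix v' v' I)"
    unfolding v' by (rule det_gram_matrix_add_span[OF j my, symmetric])
  also have "\<dots> = gram v' I" by (rule gram_eq_det_gram_matrix[symmetric])
  also have "\<dots> = (z \<bullet> z) * gram v' (I - {j})"
    unfolding gram_eq_leibniz_det
  proof (rule leibniz_det_unit_row[OF j])
    fix k assume "k \<in> I"
    thus "v' j \<bullet> v' k = (if k = j then z \<bullet> z else 0)"
      using orth[of "v k"] by (auto simp: v'_def orthogonal_def intro: span_base)
  qed
  also have "gram v' (I - {j}) = gram v (I - {j})"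
    unfolding gram_eq_leibniz_det by (rule leibniz_det_cong) (simp add: v'_def)
  finally show ?thesis using dist by (simp add: power2_norm_eq_inner)
qed

lemma gram_nonneg: "gram (v::'p::finite \<Rightarrow> real^'n) I \<ge> 0"
proof (induction I rule: finite_induct[OF finite])
  case 1 thus ?case by (simp add: gram_def)
next
  case (2 j I)
  thus ?case using gram_eq_mult_infdist[of j "insert j I" v] by simp
qed

lemma gram_eq_zero_imp_infdist_eq_zero:
  fixes v :: "'p::finite \<Rightarrow> real^'n"
  shows "gram v I = 0 \<Longrightarrow> \<exists>i\<in>I. infdist (v i) (span (v ` (I - {i}))) = 0"
proof (induction I rule: finite_induct[OF finite])
  case 1 thus ?case by (simp add: gram_def)
next
  case (2 j I)
  hence "gram v I = 0 \<or> infdist (v j) (span (v ` I)) = 0"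
    using gram_eq_mult_infdist[of j "insert j I" v] by simp
  thus ?case
  proof
    assume "gram v I = 0"
    then obtain i where i: "i \<in> I" "infdist (v i) (span (v ` (I - {i}))) = 0" using 2 by blast
    have "infdist (v i) (span (v ` (insert j I - {i}))) \<le> infdist (v i) (span (v ` (I - {i})))"
      by (intro infdist_mono span_mono) (auto intro: span_zero)
    thus ?case using i infdist_nonneg by (metis insertCI order_antisym)
  next
    assume "infdist (v j) (span (v ` I)) = 0"
    thus ?case using 2 by (auto intro!: bexI[of _ j] simp: insert_Diff_if)
  qed
qed

lemma finite_type_arg_max:
  fixes g :: "'a::finite \<Rightarrow> 'b::linorder"
  obtains j where "\<And>k. g k \<le> g j"
proof -
  have "Max (range g) \<in> range g" by (rule Max_in) auto
  then obtain j where j: "g j = Max (range g)" by (metis rangeE)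
  have "g k \<le> g j" for k unfolding j by (rule Max_ge) auto
  with that show ?thesis by blast
qed

lemma kuo_le_infdist: "kuo v \<le> infdist (v i) (span (v ` (UNIV - {i})))"
  unfolding kuo_def by (rule Min_le) auto

lemma kuo_attained:
  obtains m where "kuo v = infdist (v m) (span (v ` (UNIV - {m})))"
proof -
  have "kuo v \<in> range (\<lambda>i. infdist (v i) (span (v ` (UNIV - {i}))))"
    unfolding kuo_def by (rule Min_in) auto
  with that show ?thesis by blast
qed

lemma kuo_nonneg: "kuo v \<ge> 0"
  by (metis kuo_attained infdist_nonneg)

text \<open>The quantity of condition (3). For a dependent family the numerator vanishes, so the
  convention \<open>x / 0 = 0\<close> is harmless.\<close>

definition gram_kuo :: "('p::finite \<Rightarrow> real^'n) \<Rightarrow> real" where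
  "gram_kuo v = sqrt (gram v UNIV / (\<Sum>j\<in>UNIV. gram v (UNIV - {j})))"

lemma gram_kuo_nonneg: "gram_kuo v \<ge> 0"
  unfolding gram_kuo_def by (intro real_sqrt_ge_zero divide_nonneg_nonneg sum_nonneg gram_nonneg)

lemma gram_kuo_le_kuo: "gram_kuo v \<le> kuo v"
proof (cases "gram v UNIV = 0")
  case True
  thus ?thesis by (simp add: gram_kuo_def kuo_nonneg)
next
  case False
  obtain m where m: "kuo v = infdist (v m) (span (v ` (UNIV - {m})))" by (rule kuo_attained)
  have G: "gram v UNIV = gram v (UNIV - {m}) * (kuo v)\<^sup>2"
    using gram_eq_mult_infdist[of m UNIV v] m by simp
  with False gram_nonneg[of v] have pos: "gram v (UNIV - {m}) > 0"
    by (metis less_eq_real_def mult_zero_left)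
  have "gram v (UNIV - {m}) \<le> (\<Sum>j\<in>UNIV. gram v (UNIV - {j}))"
    by (rule member_le_sum) (auto simp: gram_nonneg)
  hence "gram v UNIV / (\<Sum>j\<in>UNIV. gram v (UNIV - {j})) \<le> gram v UNIV / gram v (UNIV - {m})"
    using pos gram_nonneg[of v UNIV] by (intro divide_left_mono) auto
  also have "\<dots> = (kuo v)\<^sup>2" using G pos by simp
  finally have "gram v UNIV / (\<Sum>j\<in>UNIV. gram v (UNIV - {j})) \<le> (kuo v)\<^sup>2" .
  from real_sqrt_le_mono[OF this] show ?thesis unfolding gram_kuo_def using kuo_nonneg[of v] by simp
qed

lemma kuo_le_sqrt_card_mult_gram_kuo: "kuo v \<le> sqrt CARD('p) * gram_kuo (v::'p::finite \<Rightarrow> real^'n)"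
proof (cases "gram v UNIV = 0")
  case True
  then obtain i where "infdist (v i) (span (v ` (UNIV - {i}))) = 0"
    using gram_eq_zero_imp_infdist_eq_zero by blast
  moreover have "0 \<le> sqrt CARD('p) * gram_kuo v" using gram_kuo_nonneg[of v] by simp
  ultimately show ?thesis using kuo_le_infdist[of v i] by linarith
next
  case False
  define g where "g j = gram v (UNIV - {j})" for j
  obtain j0 where j0: "\<And>j. g j \<le> g j0" using finite_type_arg_max[of g] by blast
  have G: "gram v UNIV = g j0 * (infdist (v j0) (span (v ` (UNIV - {j0}))))\<^sup>2"
    unfolding g_def by (rule gram_eq_mult_infdist) simp
  with False gram_nonneg[of v] have pos: "g j0 > 0"
    unfolding g_def by (metis less_eq_real_def mult_zero_left)
  have "sum g UNIV \<le> CARD('p) * g j0"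
    using sum_bounded_above[of UNIV g "g j0"] j0 by simp
  hence "gram v UNIV * sum g UNIV \<le> gram v UNIV * (CARD('p) * g j0)"
    using gram_nonneg[of v] by (simp add: mult_left_mono)
  moreover have "sum g UNIV > 0"
    using pos member_le_sum[of j0 UNIV g] gram_nonneg[of v] unfolding g_def by fastforce
  ultimately have "gram v UNIV / g j0 \<le> CARD('p) * (gram v UNIV / sum g UNIV)"
    using pos by (simp add: field_simps)
  also have "\<dots> = (sqrt CARD('p) * gram_kuo v)\<^sup>2"
    using gram_nonneg[of v] by (simp add: gram_kuo_def g_def power_mult_distrib sum_nonneg)
  finally have "(infdist (v j0) (span (v ` (UNIV - {j0}))))\<^sup>2 \<le> (sqrt CARD('p) * gram_kuo v)\<^sup>2"
    using G pos by simp
  hence "infdist (v j0) (span (v ` (UNIV - {j0}))) \<le> sqrt CARD('p) * gram_kuo v"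
    using gram_kuo_nonneg[of v] by (simp add: power2_le_iff_abs_le)
  thus ?thesis using kuo_le_infdist[of v j0] by linarith
qed

lemma in_span_image_imp_sum:
  fixes v :: "'i \<Rightarrow> 'a::real_vector"
  assumes "finite A" and "w \<in> span (v ` A)"
  obtains c where "w = (\<Sum>k\<in>A. c k *\<^sub>R v k)"
proof -
  from assms(2) have "\<exists>c. w = (\<Sum>k\<in>A. c k *\<^sub>R v k)"
  proof (induction rule: span_induct_alt)
    case base
    show ?case by (intro exI[of _ "\<lambda>_. 0"]) simp
  next
    case (step a x y)
    then obtain i d where "i \<in> A" "x = v i" "y = (\<Sum>k\<in>A. d k *\<^sub>R v k)" by auto
    thus ?case using assms(1)
      by (intro exI[of _ "\<lambda>k. d k + (if k = i then a else 0)"])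
        (simp add: scaleR_add_left sum.distrib if_distrib[of "\<lambda>r. r *\<^sub>R _"] cong: if_cong)
  qed
  with that show ?thesis by blast
qed

lemma abs_component_mult_kuo_le:
  fixes v :: "'p::finite \<Rightarrow> real^'n"
  shows "\<bar>y$i\<bar> * kuo v \<le> norm (\<Sum>k\<in>UNIV. y$k *\<^sub>R v k)"
proof (cases "y$i = 0")
  case True
  thus ?thesis by simp
next
  case False
  define w where "w = - (\<Sum>k\<in>UNIV-{i}. (y$k / y$i) *\<^sub>R v k)"
  have w: "w \<in> span (v ` (UNIV - {i}))"
    unfolding w_def by (intro span_neg span_sum span_scale span_base) auto
  have "(\<Sum>k\<in>UNIV. y$k *\<^sub>R v k) = y$i *\<^sub>R v i + (\<Sum>k\<in>UNIV-{i}. y$k *\<^sub>R v k)"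
    by (rule sum.remove) auto
  also have "\<dots> = y$i *\<^sub>R (v i - w)"
    using False by (simp add: w_def scaleR_sum_right scaleR_right_distrib)
  finally have eq: "(\<Sum>k\<in>UNIV. y$k *\<^sub>R v k) = y$i *\<^sub>R (v i - w)" .
  have "kuo v \<le> norm (v i - w)"
    using kuo_le_infdist[of v i] infdist_le[OF w, of "v i"] by (simp add: dist_norm)
  thus ?thesis unfolding eq by (simp add: mult_left_mono)
qed

lemma unit_vector_large_component:
  fixes y :: "real^'p"
  assumes "norm y = 1"
  obtains i where "1 \<le> CARD('p) * \<bar>y$i\<bar>"
proof -
  obtain i where i: "\<And>k. \<bar>y$k\<bar> \<le> \<bar>y$i\<bar>"
    using finite_type_arg_max[of "\<lambda>k. \<bar>y$k\<bar>"] by blast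
  have "1 \<le> (\<Sum>k\<in>UNIV. \<bar>y$k\<bar>)" using norm_le_l1_cart[of y] assms by simp
  also have "\<dots> \<le> CARD('p) * \<bar>y$i\<bar>"
    using sum_bounded_above[of "UNIV :: 'p set" "\<lambda>k. \<bar>y$k\<bar>" "\<bar>y$i\<bar>"] i by simp
  finally show ?thesis by (rule that)
qed

lemma kuo_le_card_mult_norm_sum:
  fixes v :: "'p::finite \<Rightarrow> real^'n"
  assumes "norm y = 1"
  shows "kuo v \<le> CARD('p) * norm (\<Sum>k\<in>UNIV. y$k *\<^sub>R v k)"
proof -
  obtain i where i: "1 \<le> CARD('p) * \<bar>y$i\<bar>" using unit_vector_large_component[OF assms] .
  have "kuo v \<le> CARD('p) * \<bar>y$i\<bar> * kuo v" using mult_right_mono[OF i kuo_nonneg] by simp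
  also have "\<dots> \<le> CARD('p) * norm (\<Sum>k\<in>UNIV. y$k *\<^sub>R v k)"
    using abs_component_mult_kuo_le[of y i v] by (simp add: mult.assoc mult_left_mono)
  finally show ?thesis .
qed

lemma unit_vector_norm_sum_le_kuo:
  fixes v :: "'p::finite \<Rightarrow> real^'n"
  obtains y :: "real^'p" where "norm y = 1" and "norm (\<Sum>k\<in>UNIV. y$k *\<^sub>R v k) \<le> kuo v"
proof -
  obtain m where m: "kuo v = infdist (v m) (span (v ` (UNIV - {m})))" by (rule kuo_attained)
  obtain w z where w: "w \<in> span (v ` (UNIV - {m}))" and vm: "v m = w + z"
    and kz: "infdist (v m) (span (v ` (UNIV - {m}))) = norm z"
    using span_orthogonal_decomp_infdist[where x="v m" and S="v ` (UNIV - {m})"] by blast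
  obtain c where c: "w = (\<Sum>k\<in>UNIV-{m}. c k *\<^sub>R v k)"
    using in_span_image_imp_sum[OF finite w] by blast
  \<comment> \<open>the coefficients of \<open>z = v m - w\<close>; the \<open>m\<close>-th one is 1, so normalising does not increase \<open>\<parallel>z\<parallel>\<close>\<close>
  define Y :: "real^'p" where "Y = (\<chi> k. if k = m then 1 else - c k)"
  have "(\<Sum>k\<in>UNIV. Y$k *\<^sub>R v k) = Y$m *\<^sub>R v m + (\<Sum>k\<in>UNIV-{m}. Y$k *\<^sub>R v k)"
    by (rule sum.remove) auto
  also have "\<dots> = z"
    using vm c by (simp add: Y_def sum_negf)
  finally have sum_Y: "(\<Sum>k\<in>UNIV. Y$k *\<^sub>R v k) = z" .
  have Y: "1 \<le> norm Y" using component_le_norm_cart[of Y m] by (simp add: Y_def)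
  hence "Y \<noteq> 0" by auto
  show ?thesis
  proof (rule that[of "Y /\<^sub>R norm Y"])
    show "norm (Y /\<^sub>R norm Y) = 1" using \<open>Y \<noteq> 0\<close> by simp
    have "(\<Sum>k\<in>UNIV. (Y /\<^sub>R norm Y)$k *\<^sub>R v k) = (\<Sum>k\<in>UNIV. Y$k *\<^sub>R v k) /\<^sub>R norm Y"
      by (simp add: scaleR_sum_right)
    hence "norm (\<Sum>k\<in>UNIV. (Y /\<^sub>R norm Y)$k *\<^sub>R v k) = norm z / norm Y"
      using sum_Y by (simp add: divide_inverse_commute)
    also have "\<dots> \<le> kuo v" using Y m kz by (simp add: divide_le_eq mult_le_cancel_left1)
    finally show "norm (\<Sum>k\<in>UNIV. (Y /\<^sub>R norm Y)$k *\<^sub>R v k) \<le> kuo v" .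
  qed
qed

lemma adjoint_linear_eq_sum:
  fixes L :: "real^'n \<Rightarrow> real^'p"
  assumes "linear L"
  shows "adjoint L y = (\<Sum>i\<in>UNIV. y$i *\<^sub>R (\<chi> j. L (axis j 1) $ i))"
proof -
  have "adjoint L = adjoint (\<lambda>x. matrix L *v x)" using matrix_vector_mul(2)[OF assms] by simp
  also have "\<dots> = (\<lambda>x. transpose (matrix L) *v x)" by (rule adjoint_matrix)
  finally show ?thesis
    by (simp add: vec_eq_iff matrix_vector_mult_def transpose_def matrix_def sum_component
        mult.commute)
qed

lemma precsim_iff_uniform_comparison:
  fixes \<phi> d h F :: "real^'n \<Rightarrow> real" and g :: "real^'n \<Rightarrow> 'a \<Rightarrow> real"
  assumes "\<epsilon> > 0" and "c \<ge> 1"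
    and upper: "\<And>x y. x \<in> cball 0 \<epsilon> \<Longrightarrow> y \<in> Y \<Longrightarrow> h x \<le> c * g x y"
    and lower: "\<And>x. x \<in> cball 0 \<epsilon> \<Longrightarrow> \<exists>y\<in>Y. g x y \<le> h x"
    and d: "\<And>x. 0 \<le> d x" and F: "\<And>x. 0 \<le> F x"
  shows "precsim \<phi> (\<lambda>x. d x * h x + F x) \<longleftrightarrow>
    (\<exists>K \<delta>. K > 0 \<and> \<delta> > 0 \<and> (\<forall>x\<in>cball 0 \<delta>. \<forall>y\<in>Y. \<phi> x \<le> K * (d x * g x y + F x)))"
proof
  assume "precsim \<phi> (\<lambda>x. d x * h x + F x)"
  then obtain K \<delta> where K: "K > 0" "\<delta> > 0"
    and bound: "\<And>x. x \<in> cball 0 \<delta> \<Longrightarrow> \<phi> x \<le> K * (d x * h x + F x)"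
    unfolding precsim_def by blast
  have "\<phi> x \<le> (K * c) * (d x * g x y + F x)" if x: "x \<in> cball 0 (min \<delta> \<epsilon>)" and "y \<in> Y" for x y
  proof -
    have "d x * h x \<le> c * (d x * g x y)"
      using mult_left_mono[OF upper d[of x]] that by (simp add: mult.left_commute)
    moreover have "F x \<le> c * F x" using mult_right_mono[OF \<open>c \<ge> 1\<close> F[of x]] by simp
    ultimately have "d x * h x + F x \<le> c * (d x * g x y + F x)" by (simp add: distrib_left)
    hence "K * (d x * h x + F x) \<le> K * (c * (d x * g x y + F x))"
      using K by (simp add: mult_left_mono)
    thus ?thesis using bound[of x] x by (simp add: mult.assoc)
  qed
  hence "K * c > 0 \<and> min \<delta> \<epsilon> > 0 \<and>
      (\<forall>x\<in>cball 0 (min \<delta> \<epsilon>). \<forall>y\<in>Y. \<phi> x \<le> (K * c) * (d x * g x y + F x))"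
    using K assms(1,2) by simp
  thus "\<exists>K \<delta>. K > 0 \<and> \<delta> > 0 \<and> (\<forall>x\<in>cball 0 \<delta>. \<forall>y\<in>Y. \<phi> x \<le> K * (d x * g x y + F x))"
    by blast
next
  assume "\<exists>K \<delta>. K > 0 \<and> \<delta> > 0 \<and> (\<forall>x\<in>cball 0 \<delta>. \<forall>y\<in>Y. \<phi> x \<le> K * (d x * g x y + F x))"
  then obtain K \<delta> where K: "K > 0" "\<delta> > 0"
    and bound: "\<And>x y. x \<in> cball 0 \<delta> \<Longrightarrow> y \<in> Y \<Longrightarrow> \<phi> x \<le> K * (d x * g x y + F x)"
    by blast
  have "\<phi> x \<le> K * (d x * h x + F x)" if x: "x \<in> cball 0 (min \<delta> \<epsilon>)" for x
  proof -
    obtain y where "y \<in> Y" and "g x y \<le> h x" using lower x by auto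
    hence "\<phi> x \<le> K * (d x * g x y + F x)" using bound x by simp
    also have "\<dots> \<le> K * (d x * h x + F x)"
      using \<open>g x y \<le> h x\<close> K d[of x] by (simp add: mult_left_mono)
    finally show ?thesis .
  qed
  hence "K > 0 \<and> min \<delta> \<epsilon> > 0 \<and> (\<forall>x\<in>cball 0 (min \<delta> \<epsilon>). \<phi> x \<le> K * (d x * h x + F x))"
    using K assms(1) by simp
  thus "precsim \<phi> (\<lambda>x. d x * h x + F x)" unfolding precsim_def by blast
qed

corollary precsim_iff_comparison:
  fixes \<phi> d h g F :: "real^'n \<Rightarrow> real"
  assumes "c \<ge> 1" and "\<And>x. h x \<le> c * g x" and "\<And>x. g x \<le> h x"
    and "\<And>x. 0 \<le> d x" and "\<And>x. 0 \<le> F x"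
  shows "precsim \<phi> (\<lambda>x. d x * h x + F x) \<longleftrightarrow> precsim \<phi> (\<lambda>x. d x * g x + F x)"
  using precsim_iff_uniform_comparison[of 1 c "{()}" h "\<lambda>x _. g x" d F \<phi>] assms
  unfolding precsim_def by auto

lemma horn_bound_imp_precsim:
  fixes f :: "real^'n \<Rightarrow> real^'p" and k :: "real^'n \<Rightarrow> real"
  assumes k: "\<And>x. 0 \<le> k x" and "C > 0" "\<alpha> > 0" "w > 0"
    and horn: "\<And>x. x \<in> horn \<Sigma> r f w \<Longrightarrow> norm x < \<alpha> \<Longrightarrow> k x \<ge> C * infdist x \<Sigma> powr (r - 1)"
  shows "precsim (\<lambda>x. infdist x \<Sigma> powr r) (\<lambda>x. infdist x \<Sigma> * k x + norm (f x))"
proof -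
  define M where "M = max (1/C) (1/w)"
  have M: "1/C \<le> M" "1/w \<le> M" "M > 0" using \<open>C > 0\<close> by (auto simp: M_def less_max_iff_disj)
  have "infdist x \<Sigma> powr r \<le> M * (infdist x \<Sigma> * k x + norm (f x))" if "norm x < \<alpha>" for x
  proof -
    define d where "d = infdist x \<Sigma>"
    have d: "d \<ge> 0" unfolding d_def by (rule infdist_nonneg)
    have dk: "0 \<le> d * k x" using d k[of x] by simp
    have "d powr r \<le> M * (d * k x + norm (f x))"
    proof (cases "x \<in> horn \<Sigma> r f w")
      case True
      hence "C * d powr (r - 1) \<le> k x" using horn \<open>norm x < \<alpha>\<close> unfolding d_def by blast
      hence "d * (C * d powr (r - 1)) \<le> d * k x" using d by (rule mult_left_mono)
      hence "C * d powr r \<le> d * k x"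
        using powr_mult_base[OF d, of "r - 1"] by (simp add: mult.left_commute)
      hence "d powr r \<le> 1/C * (d * k x)" using \<open>C > 0\<close> by (simp add: field_simps)
      also have "\<dots> \<le> M * (d * k x)" using M(1) dk by (rule mult_right_mono)
      also have "\<dots> \<le> M * (d * k x + norm (f x))" using M(3) by simp
      finally show ?thesis .
    next
      case False
      hence "d powr r \<le> 1/w * norm (f x)" using \<open>w > 0\<close> by (simp add: horn_def d_def field_simps)
      also have "\<dots> \<le> M * norm (f x)" using M(2) by (rule mult_right_mono) simp
      also have "\<dots> \<le> M * (d * k x + norm (f x))" using M(3) dk by simp
      finally show ?thesis .
    qed
    thus ?thesis unfolding d_def .
  qed
  hence "M > 0 \<and> \<alpha>/2 > 0 \<and>
      (\<forall>x\<in>cball 0 (\<alpha>/2). infdist x \<Sigma> powr r \<le> M * (infdist x \<Sigma> * k x + norm (f x)))"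
    using M(3) \<open>\<alpha> > 0\<close> by auto
  thus ?thesis unfolding precsim_def by blast
qed

lemma precsim_imp_horn_bound:
  fixes f :: "real^'n \<Rightarrow> real^'p" and k :: "real^'n \<Rightarrow> real"
  assumes k: "\<And>x. 0 \<le> k x"
    and "precsim (\<lambda>x. infdist x \<Sigma> powr r) (\<lambda>x. infdist x \<Sigma> * k x + norm (f x))"
  shows "\<exists>C \<alpha> w. C > 0 \<and> \<alpha> > 0 \<and> w > 0 \<and>
    (\<forall>x \<in> horn \<Sigma> r f w \<inter> {x. norm x < \<alpha>}. k x \<ge> C * infdist x \<Sigma> powr (r - 1))"
proof -
  obtain K \<delta> where K: "K > 0" "\<delta> > 0"
    and bound: "\<And>x. x \<in> cball 0 \<delta> \<Longrightarrow> infdist x \<Sigma> powr r \<le> K * (infdist x \<Sigma> * k x + norm (f x))"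
    using assms(2) unfolding precsim_def by blast
  have "1/(2*K) * infdist x \<Sigma> powr (r - 1) \<le> k x"
    if x: "x \<in> horn \<Sigma> r f (1/(2*K))" "norm x < \<delta>" for x
  proof -
    define d where "d = infdist x \<Sigma>"
    have d: "d \<ge> 0" unfolding d_def by (rule infdist_nonneg)
    have "d powr r \<le> K * (d * k x) + K * norm (f x)"
      using bound[of x] x by (simp add: d_def distrib_left)
    also have "K * norm (f x) \<le> d powr r / 2"
      using x K unfolding horn_def d_def by (simp add: field_simps)
    finally have "d powr r \<le> 2 * (K * (d * k x))" by simp
    hence "d * d powr (r - 1) \<le> d * (2 * K * k x)"
      using powr_mult_base[OF d, of "r - 1"] by (simp add: ac_simps)
    hence "d powr (r - 1) \<le> 2 * K * k x \<or> d = 0"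
      using d by (metis mult_le_cancel_left less_eq_real_def not_less)
    thus ?thesis using K k[of x] unfolding d_def by (auto simp: field_simps)
  qed
  hence "1/(2*K) > 0 \<and> \<delta> > 0 \<and> 1/(2*K) > 0 \<and> (\<forall>x \<in> horn \<Sigma> r f (1/(2*K)) \<inter> {x. norm x < \<delta>}.
      k x \<ge> 1/(2*K) * infdist x \<Sigma> powr (r - 1))"
    using K by auto
  thus ?thesis by blast
qed

lemma horn_bound_iff_precsim:
  fixes f :: "real^'n \<Rightarrow> real^'p" and k :: "real^'n \<Rightarrow> real"
  assumes k: "\<And>x. 0 \<le> k x"
  shows "(\<exists>C \<alpha> w. C > 0 \<and> \<alpha> > 0 \<and> w > 0 \<and>
      (\<forall>x \<in> horn \<Sigma> r f w \<inter> {x. norm x < \<alpha>}. k x \<ge> C * infdist x \<Sigma> powr (r - 1)))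
    \<longleftrightarrow> precsim (\<lambda>x. infdist x \<Sigma> powr r) (\<lambda>x. infdist x \<Sigma> * k x + norm (f x))"
proof
  assume "\<exists>C \<alpha> w. C > 0 \<and> \<alpha> > 0 \<and> w > 0 \<and>
    (\<forall>x \<in> horn \<Sigma> r f w \<inter> {x. norm x < \<alpha>}. k x \<ge> C * infdist x \<Sigma> powr (r - 1))"
  then obtain C \<alpha> w where "C > 0" "\<alpha> > 0" "w > 0"
    and "\<forall>x \<in> horn \<Sigma> r f w \<inter> {x. norm x < \<alpha>}. k x \<ge> C * infdist x \<Sigma> powr (r - 1)"
    by blast
  thus "precsim (\<lambda>x. infdist x \<Sigma> powr r) (\<lambda>x. infdist x \<Sigma> * k x + norm (f x))"
    by (intro horn_bound_imp_precsim[OF k, where C=C and \<alpha>=\<alpha> and w=w]) auto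
qed (rule precsim_imp_horn_bound[OF k])

lemma Ck_germ0_linear_df:
  fixes f :: "real^'n \<Rightarrow> real^'p"
  assumes "Ck_germ0 (Suc k) f"
  obtains \<epsilon> where "\<epsilon> > 0" and "\<And>x. x \<in> cball 0 \<epsilon> \<Longrightarrow> linear (df f x)"
proof -
  obtain U where U: "open U" "0 \<in> U" "Ck_on (Suc k) U f"
    using assms unfolding Ck_germ0_def by blast
  obtain \<epsilon> where \<epsilon>: "\<epsilon> > 0" "cball 0 \<epsilon> \<subseteq> U" using U(1,2) open_contains_cball by blast
  have "f differentiable_on U" using U(3) by simp
  have "linear (df f x)" if "x \<in> U" for x
  proof -
    have "f differentiable (at x within U)"
      using \<open>f differentiable_on U\<close> that by (simp add: differentiable_on_def)
    hence "f differentiable (at x)" using at_within_open[OF that U(1)] by simp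
    hence "(f has_derivative df f x) (at x)" unfolding df_def frechet_derivative_works .
    thus ?thesis by (rule has_derivative_linear)
  qed
  with \<epsilon> that show ?thesis by blast
qed

lemma precsim_kappa_df_iff_gram_kuo:
  fixes f :: "real^'n \<Rightarrow> real^'p" and \<phi> d F :: "real^'n \<Rightarrow> real"
  assumes "\<And>x. 0 \<le> d x" and "\<And>x. 0 \<le> F x"
  shows "precsim \<phi> (\<lambda>x. d x * kappa_df f x + F x)
    \<longleftrightarrow> precsim \<phi> (\<lambda>x. d x * gram_kuo (\<lambda>i. grad_comp f i x) + F x)"
  by (rule precsim_iff_comparison[where c="sqrt CARD('p)"])
    (simp_all add: assms kappa_df_def gram_kuo_le_kuo kuo_le_sqrt_card_mult_gram_kuo)

lemma precsim_kappa_df_iff_adjoint: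
  fixes f :: "real^'n \<Rightarrow> real^'p" and \<phi> d F :: "real^'n \<Rightarrow> real"
  assumes "\<epsilon> > 0" and lin: "\<And>x. x \<in> cball 0 \<epsilon> \<Longrightarrow> linear (df f x)"
    and "\<And>x. 0 \<le> d x" and "\<And>x. 0 \<le> F x"
  shows "precsim \<phi> (\<lambda>x. d x * kappa_df f x + F x) \<longleftrightarrow>
    (\<exists>K \<delta>. K > 0 \<and> \<delta> > 0 \<and> (\<forall>x\<in>cball 0 \<delta>. \<forall>y::real^'p. norm y = 1 \<longrightarrow>
       \<phi> x \<le> K * (d x * norm (adjoint (df f x) y) + F x)))"
proof -
  have adjoint: "adjoint (df f x) y = (\<Sum>i\<in>UNIV. y$i *\<^sub>R grad_comp f i x)"
    if "x \<in> cball 0 \<epsilon>" for x y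
    using adjoint_linear_eq_sum[OF lin[OF that]] unfolding grad_comp_def .
  have "precsim \<phi> (\<lambda>x. d x * kappa_df f x + F x) \<longleftrightarrow>
    (\<exists>K \<delta>. K > 0 \<and> \<delta> > 0 \<and> (\<forall>x\<in>cball 0 \<delta>. \<forall>y\<in>{y. norm y = 1}.
       \<phi> x \<le> K * (d x * norm (adjoint (df f x) y) + F x)))"
  proof (rule precsim_iff_uniform_comparison[OF \<open>\<epsilon> > 0\<close>, where c="CARD('p)"])
    fix x :: "real^'n" assume "x \<in> cball 0 \<epsilon>"
    thus "\<exists>y\<in>{y. norm y = 1}. norm (adjoint (df f x) y) \<le> kappa_df f x"
      using unit_vector_norm_sum_le_kuo[of "\<lambda>i. grad_comp f i x"]
      by (auto simp: adjoint kappa_df_def)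
  qed (auto simp: adjoint kappa_df_def kuo_le_card_mult_norm_sum assms)
  thus ?thesis by simp
qed

theorem proposition2p13:
  fixes \<Sigma> :: "(real^'n) set" and f :: "real^'n \<Rightarrow> real^'p" and r :: real
  assumes "closed \<Sigma>" and "0 \<in> \<Sigma>" and "r \<ge> 1" and "CARD('p) \<le> CARD('n)"
    and "Ck_germ0 (nat \<lfloor>r\<rfloor>) f"
  shows "((\<exists>C \<alpha> w. C > 0 \<and> \<alpha> > 0 \<and> w > 0 \<and>
            (\<forall>x \<in> horn \<Sigma> r f w \<inter> {x. norm x < \<alpha>}.
               kappa_df f x \<ge> C * infdist x \<Sigma> powr (r - 1)))
       \<longleftrightarrow> precsim (\<lambda>x. infdist x \<Sigma> powr r)
              (\<lambda>x. infdist x \<Sigma> * kappa_df f x + norm (f x)))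
   \<and> (precsim (\<lambda>x. infdist x \<Sigma> powr r)
              (\<lambda>x. infdist x \<Sigma> * kappa_df f x + norm (f x))
       \<longleftrightarrow> precsim (\<lambda>x. infdist x \<Sigma> powr r)
              (\<lambda>x. infdist x \<Sigma> *
                    sqrt (gram (\<lambda>i. grad_comp f i x) UNIV /
                          (\<Sum>j\<in>UNIV. gram (\<lambda>i. grad_comp f i x) (UNIV - {j})))
                   + norm (f x)))
   \<and> (precsim (\<lambda>x. infdist x \<Sigma> powr r)
              (\<lambda>x. infdist x \<Sigma> * kappa_df f x + norm (f x))
       \<longleftrightarrow> (\<exists>K \<delta>. K > 0 \<and> \<delta> > 0 \<and>
              (\<forall>x\<in>cball 0 \<delta>. \<forall>y::real^'p. norm y = 1 \<longrightarrow>
                 infdist x \<Sigma> powr r \<le>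
                 K * (infdist x \<Sigma> * norm (adjoint (df f x) y) + norm (f x)))))"
proof -
  have kappa_nonneg: "kappa_df f x \<ge> 0" for x
    by (simp add: kappa_df_def kuo_nonneg)
  have "nat \<lfloor>r\<rfloor> = Suc (nat \<lfloor>r\<rfloor> - 1)" using assms(3) by linarith
  with assms(5) have germ: "Ck_germ0 (Suc (nat \<lfloor>r\<rfloor> - 1)) f" by simp
  obtain \<epsilon> where "\<epsilon> > 0" and lin: "\<And>x. x \<in> cball 0 \<epsilon> \<Longrightarrow> linear (df f x)"
    using Ck_germ0_linear_df[OF germ] by blast
  show ?thesis
    by (intro conjI horn_bound_iff_precsim[OF kappa_nonneg]
        precsim_kappa_df_iff_gram_kuo[unfolded gram_kuo_def]
        precsim_kappa_df_iff_adjoint[OF \<open>\<epsilon> > 0\<close> lin] infdist_nonneg norm_ge_zero)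
qed

end
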